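(* In the free group $\mathbb{F}_2$ on $a,b$, set $a_0:=b^{-1}$, $b_0:=aba^{-1}$ and recursively $a_n:=a_{n-1}b_{n-1}$, $b_n:=a_{n-1}^{-1}b_{n-1}^{-1}$ for $n\ge1$. For $w\in\mathbb{F}_2$ let $\gamma(w):=\max\{m\mid w\in\gamma_m(\mathbb{F}_2)\}$. Then $\gamma(a_{n+2})\ge\gamma(a_{n+1})+\gamma(a_n)$ for all $n\in\mathbb{N}$. In particular, there exists a constant $C>0$ such that $\gamma(a_n)\ge C\cdot\varphi^n$ for all $n$, where $\varphi=\frac{1+\sqrt5}{2}$ is the golden ratio.
   Context: $\gamma_m(\mathbb{F}_2)$ denotes the $m$-th term of the lower central series: $\gamma_1(\mathbb{F}_2)=\mathbb{F}_2$, $\gamma_{m+1}(\mathbb{F}_2)=[\gamma_m(\mathbb{F}_2),\mathbb{F}_2]$. *)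

theory Defs
  imports "HOL-Algebra.Algebra" "HOL-Library.Extended_Real"
begin

text \<open>Free group on two generators: reduced words over letters (inverted?, generator),
  generator False = a, generator True = b.\<close>

type_synonym letter = "bool \<times> bool"

fun cancels :: "letter \<Rightarrow> letter \<Rightarrow> bool" where
  "cancels (i, x) (j, y) = (x = y \<and> i \<noteq> j)"

definition reduced :: "letter list \<Rightarrow> bool" where
  "reduced xs = (\<forall>i. Suc i < length xs \<longrightarrow> \<not> cancels (xs ! i) (xs ! Suc i))"

fun red_cons :: "letter \<Rightarrow> letter list \<Rightarrow> letter list" where
  "red_cons l [] = [l]"
| "red_cons l (m # ms) = (if cancels l m then ms else l # m # ms)"

definition normalize :: "letter list \<Rightarrow> letter list" where
  "normalize xs = foldr red_cons xs []"

definition F2 :: "letter list monoid" where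
  "F2 = \<lparr>carrier = {xs. reduced xs}, monoid.mult = (\<lambda>x y. normalize (x @ y)), one = []\<rparr>"

definition gen_a :: "letter list" where "gen_a = [(False, False)]"
definition gen_b :: "letter list" where "gen_b = [(False, True)]"

text \<open>Lower central series, indexed from 1: lcs G 1 = carrier G,
  lcs G (m+1) = [lcs G m, G] (subgroup generated by commutators).\<close>

fun lcs :: "('a, 'b) monoid_scheme \<Rightarrow> nat \<Rightarrow> 'a set" where
  "lcs G 0 = carrier G"
| "lcs G (Suc 0) = carrier G"
| "lcs G (Suc (Suc m)) = generate G
     {x \<otimes>\<^bsub>G\<^esub> y \<otimes>\<^bsub>G\<^esub> inv\<^bsub>G\<^esub> x \<otimes>\<^bsub>G\<^esub> inv\<^bsub>G\<^esub> y | x y. x \<in> lcs G (Suc m) \<and> y \<in> carrier G}"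

text \<open>gamma w = max {m >= 1 | w in gamma_m(F2)}, valued in enat (infinite for the identity).\<close>

definition gamma_deg :: "letter list \<Rightarrow> enat" where
  "gamma_deg w = Sup {enat m | m. 1 \<le> m \<and> w \<in> lcs F2 m}"

fun ab_seq :: "nat \<Rightarrow> letter list \<times> letter list" where
  "ab_seq 0 = (inv\<^bsub>F2\<^esub> gen_b, gen_a \<otimes>\<^bsub>F2\<^esub> gen_b \<otimes>\<^bsub>F2\<^esub> inv\<^bsub>F2\<^esub> gen_a)"
| "ab_seq (Suc n) = (let (x, y) = ab_seq n in
      (x \<otimes>\<^bsub>F2\<^esub> y, inv\<^bsub>F2\<^esub> x \<otimes>\<^bsub>F2\<^esub> inv\<^bsub>F2\<^esub> y))"

definition seq_a :: "nat \<Rightarrow> letter list" where "seq_a n = fst (ab_seq n)"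
definition seq_b :: "nat \<Rightarrow> letter list" where "seq_b n = snd (ab_seq n)"

end

theory Submission
  imports Defs
begin

text \<open>The sequence satisfies $a_{n+2} = [a_{n+1}, a_n^{-1}]$, and in every group
  $[\gamma_i, \gamma_j] \subseteq \gamma_{i+j}$: by induction on $j$, where the Hall--Witt identity
  handles the generators $[u, v]$ of $\gamma_{j+1}$. So $\gamma$ is superadditive along the
  sequence, and a Fibonacci-type recurrence with $\gamma \geq 1$ grows at least like $\varphi^n$.
  The group axioms for the reduced-word model of $F_2$ come from the fact that prepending a letter
  with cancellation is a bijection on reduced words.\<close>

lemma reduced_Nil [simp]: "reduced []"
  and reduced_single [simp]: "reduced [l]"
  by (simp_all add: reduced_def)

lemma reduced_Cons_Cons [simp]: "reduced (l # m # w) \<longleftrightarrow> \<not> cancels l m \<and> reduced (m # w)"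
  unfolding reduced_def
proof safe
  fix i assume "\<forall>i. Suc i < length (l # m # w) \<longrightarrow> \<not> cancels ((l # m # w) ! i) ((l # m # w) ! Suc i)"
    and "Suc i < length (m # w)" "cancels ((m # w) ! i) ((m # w) ! Suc i)"
  then show False by (metis length_Cons nth_Cons_Suc Suc_less_eq)
qed (auto simp: less_Suc_eq_0_disj)

lemma reduced_ConsD: "reduced (l # w) \<Longrightarrow> reduced w"
  by (cases w) simp_all

lemma reduced_red_cons: "reduced w \<Longrightarrow> reduced (red_cons l w)"
  by (cases w) (auto dest: reduced_ConsD)

lemma reduced_foldr_red_cons: "reduced v \<Longrightarrow> reduced (foldr red_cons w v)"
  by (induction w) (simp_all add: reduced_red_cons)

lemma reduced_normalize: "reduced (normalize w)"
  by (simp add: normalize_def reduced_foldr_red_cons)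

lemma normalize_reduced: "reduced w \<Longrightarrow> normalize w = w"
proof (induction w)
  case Nil
  then show ?case by (simp add: normalize_def)
next
  case (Cons l w)
  then show ?case by (cases w) (auto simp: normalize_def dest: reduced_ConsD)
qed

fun inv_letter :: "letter \<Rightarrow> letter" where
  "inv_letter (i, x) = (\<not> i, x)"

lemma inv_letter_inv_letter [simp]: "inv_letter (inv_letter l) = l"
  by (cases l) simp

lemma cancels_iff: "cancels l m \<longleftrightarrow> m = inv_letter l"
  by (cases l; cases m) auto

lemma cancels_inv_letter [simp]: "cancels (inv_letter l) (inv_letter m) \<longleftrightarrow> cancels m l"
  by (cases l; cases m) auto

lemma red_cons_inv_letter: "reduced w \<Longrightarrow> red_cons (inv_letter l) (red_cons l w) = w"
proof (cases w)
  case Nil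
  then show ?thesis by (cases l) simp
next
  case (Cons m v)
  assume "reduced w"
  show ?thesis
  proof (cases "cancels l m")
    case True
    with \<open>reduced w\<close> Cons show ?thesis
      by (cases v) (auto simp: cancels_iff)
  next
    case False
    then show ?thesis using Cons by (simp add: cancels_iff)
  qed
qed

lemma foldr_red_cons_red_cons:
  assumes "reduced v"
  shows "foldr red_cons (red_cons l w) v = red_cons l (foldr red_cons w v)"
proof (cases w)
  case (Cons m u)
  show ?thesis
  proof (cases "cancels l m")
    case True
    have "reduced (foldr red_cons u v)"
      using assms by (rule reduced_foldr_red_cons)
    then show ?thesis
      using Cons True red_cons_inv_letter [of _ m] by (simp add: cancels_iff)
  next
    case False
    then show ?thesis using Cons by simp
  qed
qed simp

lemma normalize_append: "normalize (u @ v) = foldr red_cons u (normalize v)"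
  by (simp add: normalize_def)

lemma foldr_red_cons_normalize:
  "reduced v \<Longrightarrow> foldr red_cons (normalize w) v = foldr red_cons w v"
  by (induction w) (simp_all add: normalize_def foldr_red_cons_red_cons)

definition word_inv :: "letter list \<Rightarrow> letter list" where
  "word_inv w = rev (map inv_letter w)"

lemma foldr_red_cons_word_inv:
  "reduced v \<Longrightarrow> foldr red_cons w (foldr red_cons (word_inv w) v) = v"
proof (induction w arbitrary: v)
  case Nil
  then show ?case by (simp add: word_inv_def)
next
  case (Cons l w)
  then show ?case
    using red_cons_inv_letter [of v "inv_letter l"]
    by (simp add: word_inv_def reduced_red_cons)
qed

lemma reduced_word_inv:
  assumes "reduced w"
  shows "reduced (word_inv w)"
  unfolding reduced_def word_inv_def
proof (intro allI impI)
  fix i assume i: "Suc i < length (rev (map inv_letter w))"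
  define j where "j = length w - Suc (Suc i)"
  have j: "Suc j < length w" "length w - Suc i = Suc j" "length w - Suc (Suc i) = j"
    using i by (auto simp: j_def)
  then have "\<not> cancels (w ! j) (w ! Suc j)"
    using assms by (simp add: reduced_def)
  then show "\<not> cancels (rev (map inv_letter w) ! i) (rev (map inv_letter w) ! Suc i)"
    using i j by (simp add: rev_nth)
qed

lemma group_F2: "group F2"
proof (rule groupI)
  fix x y z assume "x \<in> carrier F2" "y \<in> carrier F2" "z \<in> carrier F2"
  have "normalize (normalize (x @ y) @ z) = foldr red_cons (normalize (x @ y)) (normalize z)"
    by (rule normalize_append)
  also have "\<dots> = foldr red_cons (x @ y) (normalize z)"
    by (rule foldr_red_cons_normalize [OF reduced_normalize])
  also have "\<dots> = normalize (x @ normalize (y @ z))"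
    by (simp add: normalize_append normalize_reduced reduced_normalize reduced_foldr_red_cons)
  finally show "x \<otimes>\<^bsub>F2\<^esub> y \<otimes>\<^bsub>F2\<^esub> z = x \<otimes>\<^bsub>F2\<^esub> (y \<otimes>\<^bsub>F2\<^esub> z)"
    by (simp add: F2_def)
next
  fix x assume x: "x \<in> carrier F2"
  have "word_inv x \<otimes>\<^bsub>F2\<^esub> x = \<one>\<^bsub>F2\<^esub>"
    using foldr_red_cons_word_inv [of "[]" "word_inv x"]
    by (simp add: F2_def normalize_def word_inv_def rev_map comp_def)
  moreover have "word_inv x \<in> carrier F2"
    using x by (simp add: F2_def reduced_word_inv)
  ultimately show "\<exists>y\<in>carrier F2. y \<otimes>\<^bsub>F2\<^esub> x = \<one>\<^bsub>F2\<^esub>" by blast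
qed (simp_all add: F2_def reduced_normalize normalize_reduced)

declare lcs.simps(3) [simp del]

context group begin

lemma inv_mult_cancel [simp]: "x \<in> carrier G \<Longrightarrow> y \<in> carrier G \<Longrightarrow> inv x \<otimes> (x \<otimes> y) = y"
  by (simp add: m_assoc [symmetric])

lemma mult_inv_cancel [simp]: "x \<in> carrier G \<Longrightarrow> y \<in> carrier G \<Longrightarrow> x \<otimes> (inv x \<otimes> y) = y"
  by (simp add: m_assoc [symmetric])

definition commutator :: "'a \<Rightarrow> 'a \<Rightarrow> 'a"
  where "commutator x y = x \<otimes> y \<otimes> inv x \<otimes> inv y"

lemma commutator_closed [simp]:
  "x \<in> carrier G \<Longrightarrow> y \<in> carrier G \<Longrightarrow> commutator x y \<in> carrier G"
  by (simp add: commutator_def)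

lemma commutator_one_right [simp]: "x \<in> carrier G \<Longrightarrow> commutator x \<one> = \<one>"
  by (simp add: commutator_def)

lemma inv_commutator:
  "x \<in> carrier G \<Longrightarrow> y \<in> carrier G \<Longrightarrow> inv (commutator x y) = commutator y x"
  by (simp add: commutator_def m_assoc inv_mult_group)

lemma commutator_inv_right:
  "x \<in> carrier G \<Longrightarrow> y \<in> carrier G \<Longrightarrow> commutator x (inv y) = inv y \<otimes> inv (commutator x y) \<otimes> y"
  by (simp add: commutator_def m_assoc inv_mult_group)

lemma commutator_mult_right:
  "x \<in> carrier G \<Longrightarrow> y \<in> carrier G \<Longrightarrow> z \<in> carrier G \<Longrightarrow>
    commutator x (y \<otimes> z) = commutator x y \<otimes> (y \<otimes> commutator x z \<otimes> inv y)"
  by (simp add: commutator_def m_assoc inv_mult_group)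

lemma conj_commutator:
  "g \<in> carrier G \<Longrightarrow> x \<in> carrier G \<Longrightarrow> y \<in> carrier G \<Longrightarrow>
    g \<otimes> commutator x y \<otimes> inv g = commutator (g \<otimes> x \<otimes> inv g) (g \<otimes> y \<otimes> inv g)"
  by (simp add: commutator_def m_assoc inv_mult_group)

text \<open>A form of the Hall--Witt identity.\<close>

lemma commutator_commutator:
  "x \<in> carrier G \<Longrightarrow> y \<in> carrier G \<Longrightarrow> z \<in> carrier G \<Longrightarrow>
    commutator x (commutator y z) =
      y \<otimes> ((x \<otimes> commutator (commutator (inv x) (inv y)) z \<otimes> inv x)
        \<otimes> (z \<otimes> commutator (commutator (inv z) x) (inv y) \<otimes> inv z)) \<otimes> inv y"
  by (simp add: commutator_def m_assoc inv_mult_group)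

lemma commutator_in_normal:
  assumes "N \<lhd> G" "x \<in> N" "y \<in> carrier G"
  shows "commutator x y \<in> N"
proof -
  interpret N: normal N G by fact
  have "commutator x y = x \<otimes> (y \<otimes> inv x \<otimes> inv y)"
    using assms(2,3) by (simp add: commutator_def m_assoc)
  then show ?thesis
    using assms(2,3) by (simp add: N.inv_op_closed2)
qed

lemma commutator_commutator_in_normal:
  assumes "N \<lhd> G" and x: "x \<in> carrier G" and y: "y \<in> carrier G" and z: "z \<in> carrier G"
    and "commutator (commutator (inv x) (inv y)) z \<in> N"
    and "commutator (commutator (inv z) x) (inv y) \<in> N"
  shows "commutator x (commutator y z) \<in> N"
proof -
  interpret N: normal N G by fact
  show ?thesis
    unfolding commutator_commutator [OF x y z]
    using assms by (intro N.inv_op_closed2 N.m_closed) simp_all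
qed

lemma commutator_generate_in_normal:
  assumes "N \<lhd> G" "H \<subseteq> carrier G" "x \<in> carrier G" "\<And>h. h \<in> H \<Longrightarrow> commutator x h \<in> N"
    and "y \<in> generate G H"
  shows "commutator x y \<in> N"
proof -
  interpret N: normal N G by fact
  from assms(5) show ?thesis
  proof (induction y rule: generate.induct)
    case one
    then show ?case using assms(3) by simp
  next
    case (incl h)
    then show ?case by (rule assms(4))
  next
    case (inv h)
    have h: "h \<in> carrier G" using inv assms(2) by blast
    then show ?case
      using N.inv_op_closed1 [OF h N.m_inv_closed [OF assms(4) [OF inv]]] assms(3)
      by (simp add: commutator_inv_right)
  next
    case (eng h1 h2)
    have "h1 \<in> carrier G" "h2 \<in> carrier G"
      using eng.hyps generate_in_carrier [OF assms(2)] by auto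
    then show ?case
      using eng.IH assms(3) by (simp add: commutator_mult_right N.inv_op_closed2)
  qed
qed

lemma lcs_Suc_Suc:
  "lcs G (Suc (Suc m)) = generate G {commutator x y | x y. x \<in> lcs G (Suc m) \<and> y \<in> carrier G}"
  by (simp add: lcs.simps(3) commutator_def)

lemma lcs_normal: "lcs G m \<lhd> G"
proof (induction m)
  case 0
  show ?case by (simp add: normal_self)
next
  case (Suc m)
  show ?case
  proof (cases m)
    case 0
    then show ?thesis by (simp add: normal_self)
  next
    case (Suc k)
    let ?S = "{commutator x y | x y. x \<in> lcs G (Suc k) \<and> y \<in> carrier G}"
    interpret N: normal "lcs G (Suc k)" G
      using Suc.IH \<open>m = Suc k\<close> by simp
    have "generate G ?S \<lhd> G"
    proof (rule normal_generateI)
      show "?S \<subseteq> carrier G" by auto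
      fix h g assume "h \<in> ?S" and g: "g \<in> carrier G"
      then obtain x y where h: "h = commutator x y" "x \<in> lcs G (Suc k)" "y \<in> carrier G"
        by blast
      then have "g \<otimes> h \<otimes> inv g = commutator (g \<otimes> x \<otimes> inv g) (g \<otimes> y \<otimes> inv g)"
        using g by (simp add: conj_commutator)
      moreover have "g \<otimes> x \<otimes> inv g \<in> lcs G (Suc k)"
        using g h(2) by (rule N.inv_op_closed2)
      ultimately show "g \<otimes> h \<otimes> inv g \<in> ?S"
        using g h(3) by blast
    qed
    then show ?thesis by (simp add: lcs_Suc_Suc \<open>m = Suc k\<close>)
  qed
qed

lemma lcs_mem_carrier: "x \<in> lcs G m \<Longrightarrow> x \<in> carrier G"
  by (rule subgroup.mem_carrier [OF normal_imp_subgroup [OF lcs_normal]])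

lemma lcs_inv_closed: "x \<in> lcs G m \<Longrightarrow> inv x \<in> lcs G m"
  by (rule subgroup.m_inv_closed [OF normal_imp_subgroup [OF lcs_normal]])

lemma commutator_in_lcs_Suc:
  assumes "x \<in> lcs G m" "y \<in> carrier G"
  shows "commutator x y \<in> lcs G (Suc m)"
proof (cases m)
  case 0
  then show ?thesis using assms by simp
next
  case (Suc k)
  then show ?thesis
    using assms by (auto simp: lcs_Suc_Suc intro: generate.incl)
qed

lemma commutator_in_lcs_add:
  "x \<in> lcs G i \<Longrightarrow> y \<in> lcs G j \<Longrightarrow> commutator x y \<in> lcs G (i + j)"
proof (induction j arbitrary: i x y)
  case 0
  then show ?case by (simp add: commutator_in_normal [OF lcs_normal])
next
  case (Suc j)
  show ?case
  proof (cases j)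
    case 0
    then show ?thesis using Suc.prems by (simp add: commutator_in_lcs_Suc)
  next
    case (Suc k)
    let ?S = "{commutator u v | u v. u \<in> lcs G (Suc k) \<and> v \<in> carrier G}"
    note x = Suc.prems(1) and IH = Suc.IH [unfolded \<open>j = Suc k\<close>]
    have x_carrier: "x \<in> carrier G" using x by (rule lcs_mem_carrier)
    have "commutator x (commutator u v) \<in> lcs G (i + Suc (Suc k))"
      if u: "u \<in> lcs G (Suc k)" and v: "v \<in> carrier G" for u v
    proof (rule commutator_commutator_in_normal [OF lcs_normal x_carrier _ v])
      show u_carrier: "u \<in> carrier G" using u by (rule lcs_mem_carrier)
      have "commutator (inv x) (inv u) \<in> lcs G (i + Suc k)"
        using IH [OF lcs_inv_closed [OF x] lcs_inv_closed [OF u]] .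
      from commutator_in_lcs_Suc [OF this v]
      show "commutator (commutator (inv x) (inv u)) v \<in> lcs G (i + Suc (Suc k))"
        by simp
      have "commutator (inv v) x = inv (commutator x (inv v))"
        using x_carrier v by (simp add: inv_commutator)
      then have "commutator (inv v) x \<in> lcs G (Suc i)"
        using commutator_in_lcs_Suc [OF x] v by (simp add: lcs_inv_closed)
      from IH [OF this lcs_inv_closed [OF u]]
      show "commutator (commutator (inv v) x) (inv u) \<in> lcs G (i + Suc (Suc k))"
        by simp
    qed
    then have "\<And>h. h \<in> ?S \<Longrightarrow> commutator x h \<in> lcs G (i + Suc j)"
      using \<open>j = Suc k\<close> by blast
    moreover have "y \<in> generate G ?S"
      using Suc.prems(2) \<open>j = Suc k\<close> by (simp add: lcs_Suc_Suc)
    moreover have "?S \<subseteq> carrier G"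
      by (auto dest: lcs_mem_carrier)
    ultimately show ?thesis
      using commutator_generate_in_normal [OF lcs_normal _ x_carrier] by blast
  qed
qed

end

interpretation F2: group F2
  by (rule group_F2)

lemma Sup_add_Sup_le_enat:
  fixes A B C :: "enat set"
  assumes "a \<in> A" "b \<in> B" and add: "\<And>a b. a \<in> A \<Longrightarrow> b \<in> B \<Longrightarrow> a + b \<in> C"
  shows "Sup A + Sup B \<le> Sup C"
proof (cases "Sup C")
  case (enat K)
  have "x \<le> enat K" if "x \<in> A" for x
  proof -
    have "x \<le> x + b" by simp
    also have "\<dots> \<le> Sup C" using add [OF that assms(2)] by (rule Sup_upper)
    finally show ?thesis using enat by simp
  qed
  moreover have "y \<le> enat K" if "y \<in> B" for y
  proof -
    have "y \<le> a + y" by simp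
    also have "\<dots> \<le> Sup C" using add [OF assms(1) that] by (rule Sup_upper)
    finally show ?thesis using enat by simp
  qed
  ultimately have "finite A" "finite B"
    by (auto intro: finite_enat_bounded)
  then have "Sup A \<in> A" "Sup B \<in> B"
    using assms(1,2) by (auto simp: Sup_enat_def intro: Max_in)
  then show ?thesis by (intro Sup_upper add)
qed simp

lemma one_le_gamma_deg: "w \<in> carrier F2 \<Longrightarrow> 1 \<le> gamma_deg w"
  unfolding gamma_deg_def one_enat_def by (rule Sup_upper) auto

lemma gamma_deg_inv: "w \<in> carrier F2 \<Longrightarrow> gamma_deg (inv\<^bsub>F2\<^esub> w) = gamma_deg w"
  unfolding gamma_deg_def by (metis F2.inv_inv F2.lcs_inv_closed)

lemma gamma_deg_commutator:
  assumes "x \<in> carrier F2" "y \<in> carrier F2"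
  shows "gamma_deg x + gamma_deg y \<le> gamma_deg (F2.commutator x y)"
  unfolding gamma_deg_def
proof (rule Sup_add_Sup_le_enat)
  show "enat 1 \<in> {enat m |m. 1 \<le> m \<and> x \<in> lcs F2 m}"
    and "enat 1 \<in> {enat m |m. 1 \<le> m \<and> y \<in> lcs F2 m}"
    using assms by auto
next
  fix a b
  assume "a \<in> {enat m |m. 1 \<le> m \<and> x \<in> lcs F2 m}" "b \<in> {enat m |m. 1 \<le> m \<and> y \<in> lcs F2 m}"
  then obtain i j where "a = enat i" "1 \<le> i" "x \<in> lcs F2 i" "b = enat j" "y \<in> lcs F2 j"
    by blast
  then show "a + b \<in> {enat m |m. 1 \<le> m \<and> F2.commutator x y \<in> lcs F2 m}"
    using F2.commutator_in_lcs_add by fastforce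
qed

lemma gen_a_carrier: "gen_a \<in> carrier F2" and gen_b_carrier: "gen_b \<in> carrier F2"
  by (simp_all add: F2_def gen_a_def gen_b_def)

lemma ab_seq_carrier: "fst (ab_seq n) \<in> carrier F2 \<and> snd (ab_seq n) \<in> carrier F2"
  by (induction n) (auto simp: gen_a_carrier gen_b_carrier split: prod.split)

lemma seq_a_carrier: "seq_a n \<in> carrier F2"
  using ab_seq_carrier by (simp add: seq_a_def)

lemma seq_a_Suc_Suc: "seq_a (Suc (Suc n)) = F2.commutator (seq_a (Suc n)) (inv\<^bsub>F2\<^esub> seq_a n)"
proof -
  obtain x y where xy: "ab_seq n = (x, y)" by fastforce
  then have "x \<in> carrier F2" "y \<in> carrier F2"
    using ab_seq_carrier [of n] by simp_all
  then show ?thesis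
    using xy by (simp add: seq_a_def F2.commutator_def F2.m_assoc F2.inv_mult_group)
qed

lemma gamma_deg_seq_a_Suc_Suc:
  "gamma_deg (seq_a (Suc n)) + gamma_deg (seq_a n) \<le> gamma_deg (seq_a (Suc (Suc n)))"
  using gamma_deg_commutator [OF seq_a_carrier F2.inv_closed [OF seq_a_carrier]]
  by (simp add: seq_a_Suc_Suc gamma_deg_inv seq_a_carrier)

lemma golden_ratio_growth:
  fixes f :: "nat \<Rightarrow> ereal"
  defines "\<phi> \<equiv> (1 + sqrt 5) / 2"
  assumes "\<And>n. 1 \<le> f n" and "\<And>n. f (Suc n) + f n \<le> f (Suc (Suc n))"
  shows "ereal (\<phi> ^ n / \<phi>) \<le> f n"
proof -
  have "\<phi> > 1" by (simp add: \<phi>_def)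
  have \<phi>_sq: "\<phi> ^ 2 = \<phi> + 1" by (simp add: \<phi>_def power2_eq_square algebra_simps)
  have "ereal (\<phi> ^ n / \<phi>) \<le> f n \<and> ereal (\<phi> ^ Suc n / \<phi>) \<le> f (Suc n)"
  proof (induction n)
    case 0
    have "ereal (1 / \<phi>) \<le> 1" using \<open>\<phi> > 1\<close> by simp
    then show ?case
      using order_trans [OF _ assms(2) [of 0]] assms(2) [of 1] \<open>\<phi> > 1\<close>
      by (simp add: one_ereal_def)
  next
    case (Suc n)
    have "\<phi> ^ Suc (Suc n) = \<phi> ^ n * \<phi> ^ 2"
      by (simp add: power_add [symmetric])
    also have "\<dots> = \<phi> ^ Suc n + \<phi> ^ n"
      using \<phi>_sq by (simp add: algebra_simps)
    finally have "ereal (\<phi> ^ Suc (Suc n) / \<phi>) = ereal (\<phi> ^ Suc n / \<phi>) + ereal (\<phi> ^ n / \<phi>)"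
      by (simp add: add_divide_distrib)
    also have "\<dots> \<le> f (Suc n) + f n"
      using Suc.IH by (intro add_mono) auto
    also have "\<dots> \<le> f (Suc (Suc n))"
      by (rule assms(3))
    finally show ?case using Suc.IH by simp
  qed
  then show ?thesis by simp
qed

theorem lemma2p5:
  shows "(\<forall>n. gamma_deg (seq_a (n + 2)) \<ge> gamma_deg (seq_a (n + 1)) + gamma_deg (seq_a n))
    \<and> (\<exists>C::real. C > 0 \<and> (\<forall>n. ereal_of_enat (gamma_deg (seq_a n)) \<ge> ereal (C * ((1 + sqrt 5) / 2) ^ n)))"
proof
  show "\<forall>n. gamma_deg (seq_a (n + 2)) \<ge> gamma_deg (seq_a (n + 1)) + gamma_deg (seq_a n)"
    using gamma_deg_seq_a_Suc_Suc by (simp add: numeral_2_eq_2)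
next
  define \<phi> :: real where "\<phi> = (1 + sqrt 5) / 2"
  let ?f = "\<lambda>n. ereal_of_enat (gamma_deg (seq_a n))"
  have "1 \<le> ?f n" for n
    using one_le_gamma_deg [OF seq_a_carrier, of n] ereal_of_enat_le_iff [of 1]
    by (simp add: one_enat_def one_ereal_def)
  moreover have "?f (Suc n) + ?f n \<le> ?f (Suc (Suc n))" for n
    using gamma_deg_seq_a_Suc_Suc by (simp add: ereal_of_enat_add [symmetric])
  ultimately have "ereal (\<phi> ^ n / \<phi>) \<le> ?f n" for n
    unfolding \<phi>_def by (rule golden_ratio_growth)
  moreover have "\<phi> > 0" by (simp add: \<phi>_def add_pos_pos)
  ultimately have "1 / \<phi> > 0 \<and> (\<forall>n. ?f n \<ge> ereal (1 / \<phi> * \<phi> ^ n))"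
    by simp
  then show "\<exists>C::real. C > 0 \<and> (\<forall>n. ?f n \<ge> ereal (C * ((1 + sqrt 5) / 2) ^ n))"
    unfolding \<phi>_def by blast
qed

end
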